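(* Let $w$ be a word of odd rank and $c$ a legal point of $\mathcal C_w$ whose intersection sequence $T(c)$ is simple. Then the polygonal $\mathcal G(c)$ is regular.
   Context: For real parameters $\mathrm a,\mathrm b$, the map $F:\mathbb R^2\to\mathbb R^2$ is $F(x,y)=(\mathrm a x-y,x)$ if $x>0$ or ($x=0$ and $y\le0$), and $F(x,y)=(\mathrm b x-y,x)$ otherwise. Letter $a$ is assigned to points in the open right half-plane or on the negative $y$-axis, and $b$ otherwise. Boundary rays are the $y$ semi-axes $L^\pm$. For a word $w=w_0\cdots w_{n-1}$: $Q_{-1}=-1$, $Q_0=0$, $Q_{t+1}=w_tQ_t-Q_{t-1}$ (letters specialised to $\mathrm a,\mathrm b$). The rank is $1+|w|_{ab}+|w|_{ba}$. For odd rank, with $\mathbf k=\lfloor n/2\rfloor$, $C_w=Q_{\mathbf k+1}-Q_{\mathbf k}$ ($n$ odd) or $Q_{\mathbf k+1}-Q_{\mathbf k-1}$ ($n$ even), and $\mathcal C_w=\{C_w=0\}$. A legal point of $\mathcal C_w$ is a parameter pair at which $w$ is equivalent to the symbolic word of the actual $F$-orbit segment between the two boundary rays. Equivalence allows changing letters at positions where the orbit lies on a boundary ray; equivalence "at $c$" refers to this orbit at parameters $c$. Intersection sequence: $T(c)=(t_1,t_2,\dots)$, the increasing list of $t$ with $0<t<n$ and $Q_t(c)=0$. $T(c)$ is simple if it is empty or if the word $w_0\cdots w_{t_1-1}$ is equivalent at $c$ to a word of rank $1$. Polygonal: let $\gamma_t=(Q_t^2,0)$ if $w_t=a$ and $\gamma_t=(0,Q_t^2)$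 if $w_t=b$, and $\Gamma_t=\sum_{i=0}^t\gamma_i$ for $t=0,\dots,n-1$. $\mathcal G(c)$ is the polygonal line through $\Gamma_0(c),\dots,\Gamma_{n-1}(c)$. An intersection point of $\mathcal G$ is a $\Gamma_t$ with $\Gamma_t=\Gamma_{t-1}$. The median of $\mathcal G$ is the segment $[\Gamma_0,\Gamma_{n-1}]$. $\mathcal G$ is regular if no intersection point lies on its median. *)

theory Defs
  imports "HOL-Analysis.Analysis"
begin

datatype letter = A | B

fun lval :: "real \<times> real \<Rightarrow> letter \<Rightarrow> real" where
  "lval (a, b) A = a"
| "lval (a, b) B = b"

definition letter_of :: "real \<times> real \<Rightarrow> letter" where
  "letter_of p = (if fst p > 0 \<or> (fst p = 0 \<and> snd p \<le> 0) then A else B)"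

definition Fmap :: "real \<times> real \<Rightarrow> real \<times> real \<Rightarrow> real \<times> real" where
  "Fmap c p = (lval c (letter_of p) * fst p - snd p, fst p)"

definition on_boundary :: "real \<times> real \<Rightarrow> bool" where
  "on_boundary p = (fst p = 0 \<and> snd p \<noteq> 0)"

text \<open>Orbit starting at (Q_0, Q_{-1}) = (0,-1) on L-.\<close>
definition orbit :: "real \<times> real \<Rightarrow> nat \<Rightarrow> real \<times> real" where
  "orbit c t = (Fmap c ^^ t) (0, -1)"

definition sym_word :: "real \<times> real \<Rightarrow> nat \<Rightarrow> letter list" where
  "sym_word c n = map (\<lambda>t. letter_of (orbit c t)) [0..<n]"

definition equiv_at :: "real \<times> real \<Rightarrow> letter list \<Rightarrow> letter list \<Rightarrow> bool" where
  "equiv_at c u v = (length u = length v \<and>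
     (\<forall>t < length u. u ! t \<noteq> v ! t \<longrightarrow> on_boundary (orbit c t)))"

text \<open>Qp c w t = (Q_{t-1}, Q_t).\<close>
fun Qp :: "real \<times> real \<Rightarrow> letter list \<Rightarrow> nat \<Rightarrow> real \<times> real" where
  "Qp c w 0 = (-1, 0)"
| "Qp c w (Suc t) = (snd (Qp c w t), lval c (w ! t) * snd (Qp c w t) - fst (Qp c w t))"

definition Q :: "real \<times> real \<Rightarrow> letter list \<Rightarrow> nat \<Rightarrow> real" where
  "Q c w t = snd (Qp c w t)"

definition Qprev :: "real \<times> real \<Rightarrow> letter list \<Rightarrow> nat \<Rightarrow> real" where
  "Qprev c w t = fst (Qp c w t)"

definition count_factor :: "letter \<Rightarrow> letter \<Rightarrow> letter list \<Rightarrow> nat" where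
  "count_factor x y w = card {i. Suc i < length w \<and> w ! i = x \<and> w ! Suc i = y}"

definition rank :: "letter list \<Rightarrow> nat" where
  "rank w = 1 + count_factor A B w + count_factor B A w"

definition Cw :: "letter list \<Rightarrow> real \<times> real \<Rightarrow> real" where
  "Cw w c = (let n = length w; k = n div 2 in
     if odd n then Q c w (k + 1) - Q c w k else Q c w (k + 1) - Qprev c w k)"

definition legal_point :: "letter list \<Rightarrow> real \<times> real \<Rightarrow> bool" where
  "legal_point w c = (Cw w c = 0 \<and> equiv_at c w (sym_word c (length w)))"

definition isec_seq :: "real \<times> real \<Rightarrow> letter list \<Rightarrow> nat list" where
  "isec_seq c w = filter (\<lambda>t. Q c w t = 0) [1..<length w]"

definition simple_isec :: "real \<times> real \<Rightarrow> letter list \<Rightarrow> bool" where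
  "simple_isec c w = (isec_seq c w = [] \<or>
     (\<exists>u. rank u = 1 \<and> equiv_at c (take (hd (isec_seq c w)) w) u))"

definition gamma :: "real \<times> real \<Rightarrow> letter list \<Rightarrow> nat \<Rightarrow> real \<times> real" where
  "gamma c w t = (if w ! t = A then ((Q c w t)\<^sup>2, 0) else (0, (Q c w t)\<^sup>2))"

definition Gamma :: "real \<times> real \<Rightarrow> letter list \<Rightarrow> nat \<Rightarrow> real \<times> real" where
  "Gamma c w t = (\<Sum>i = 0..t. gamma c w i)"

text \<open>Regular polygonal: no intersection point lies on the median.\<close>
definition regular_polygonal :: "real \<times> real \<Rightarrow> letter list \<Rightarrow> bool" where
  "regular_polygonal c w = (\<forall>t. 1 \<le> t \<and> t < length w \<and> Gamma c w t = Gamma c w (t - 1) \<longrightarrow>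
      Gamma c w t \<notin> closed_segment (Gamma c w 0) (Gamma c w (length w - 1)))"

end

theory Submission
  imports Defs
begin

text \<open>At a legal point the sequence \<open>Q\<close> follows the orbit, so
  \<open>Q (t + 1) = s (Q t) - Q (t - 1)\<close> with the positively homogeneous map \<open>s y = a y\<close> for
  \<open>y > 0\<close> and \<open>s y = b y\<close> otherwise, and \<open>C\<^sub>w = 0\<close> makes \<open>Q\<close> symmetric:
  \<open>Q (n - t) = Q t\<close>. Simplicity of \<open>T(c)\<close> keeps \<open>Q\<close> positive up to its first zero \<open>t\<^sub>1\<close>,
  where an invariant quadratic form gives \<open>Q (t\<^sub>1 - 1) = 1\<close> and \<open>Q (t\<^sub>1 + 1) = -1\<close>. By
  symmetry the zero \<open>n - t\<^sub>1\<close> is followed by \<open>1\<close>, so by homogeneity \<open>Q\<close> is periodic, with a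
  period \<open>P\<close> whose only zeros in \<open>[0, P)\<close> are \<open>0\<close> and \<open>t\<^sub>1\<close>, and \<open>n \<equiv> t\<^sub>1 (mod P)\<close>.
  Hence the intersection points of the polygonal are \<open>j V\<close> and \<open>j V + (A, 0)\<close>, where \<open>V\<close>,
  with positive second coordinate, is the displacement over one period and \<open>A > 0\<close> comes from
  the first arc. The median ends at \<open>(n div P) V + (A, 0)\<close>, and comparing coordinates shows
  that none of these points lies on it.\<close>

section \<open>Second-order recurrences\<close>

lemma recurrence_scaled_copy:
  fixes x :: "nat \<Rightarrow> real"
  assumes recurrence: "\<And>m. 1 \<le> m \<Longrightarrow> m < n \<Longrightarrow> x (Suc m) = g (x m) - x (m - 1)"
    and g_scale: "\<And>y. g (l * y) = l * g y"
    and "y \<le> z" and start: "x z = l * x y" "x (Suc z) = l * x (Suc y)"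
    and "z + j \<le> n"
  shows "x (z + j) = l * x (y + j)"
proof -
  have copy2: "x (z + j) = l * x (y + j) \<and> x (Suc (z + j)) = l * x (Suc (y + j))"
    if "z + j < n" for j
    using that
  proof (induction j)
    case 0
    then show ?case using start by simp
  next
    case (Suc j)
    then have IH: "x (z + j) = l * x (y + j) \<and> x (Suc (z + j)) = l * x (Suc (y + j))"
      by simp
    have "x (Suc (Suc (z + j))) = g (x (Suc (z + j))) - x (z + j)"
      using recurrence[of "Suc (z + j)"] Suc.prems by simp
    also have "\<dots> = l * (g (x (Suc (y + j))) - x (y + j))"
      using IH g_scale by (simp add: right_diff_distrib)
    also have "\<dots> = l * x (Suc (Suc (y + j)))"
      using recurrence[of "Suc (y + j)"] Suc.prems \<open>y \<le> z\<close> by simp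
    finally show ?case using IH by simp
  qed
  show ?thesis
  proof (cases j)
    case 0
    then show ?thesis using start by simp
  next
    case (Suc j')
    then show ?thesis using copy2[of j'] \<open>z + j \<le> n\<close> by simp
  qed
qed

lemma recurrence_reflection:
  fixes x :: "nat \<Rightarrow> real"
  assumes recurrence: "\<And>m. 1 \<le> m \<Longrightarrow> m < n \<Longrightarrow> x (Suc m) = g (x m) - x (m - 1)"
    and "p + q = n" "1 \<le> q" and centre: "x p = x q" "x (Suc p) = x (q - 1)"
    and "j \<le> p"
  shows "x (p - j) = x (q + j)"
proof -
  have "x (p - j) = x (q + j) \<and> x (Suc (p - j)) = x (q + j - 1)"
    using \<open>j \<le> p\<close>
  proof (induction j)
    case 0
    then show ?case using centre by simp
  next
    case (Suc j)
    then have IH: "x (p - j) = x (q + j) \<and> x (Suc (p - j)) = x (q + j - 1)" by simp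
    have "x (p - Suc j) = g (x (p - j)) - x (Suc (p - j))"
      using recurrence[of "p - j"] Suc.prems assms(2,3) by simp
    also have "\<dots> = g (x (q + j)) - x (q + j - 1)"
      using IH by simp
    also have "\<dots> = x (q + Suc j)"
      using recurrence[of "q + j"] Suc.prems assms(2,3) by simp
    finally show ?case using IH Suc.prems by (simp add: Suc_diff_Suc)
  qed
  then show ?thesis by simp
qed

lemma recurrence_symmetric:
  fixes x :: "nat \<Rightarrow> real"
  assumes recurrence: "\<And>m. 1 \<le> m \<Longrightarrow> m < n \<Longrightarrow> x (Suc m) = g (x m) - x (m - 1)"
    and "p + q = n" "1 \<le> q" "q \<le> Suc p" and centre: "x p = x q" "x (Suc p) = x (q - 1)"
    and "t \<le> n"
  shows "x (n - t) = x t"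
proof (cases "t \<le> p")
  case True
  then show ?thesis
    using recurrence_reflection[OF recurrence assms(2,3) centre, of "p - t"] assms(2)
    by (simp add: add.commute)
next
  case False
  then have "n - t \<le> p" "q + (p - (n - t)) = t" using assms by linarith+
  then show ?thesis
    using recurrence_reflection[OF recurrence assms(2,3) centre, of "p - (n - t)"] by simp
qed

lemma sum_lessThan_periodic:
  fixes f :: "nat \<Rightarrow> 'a::real_vector"
  assumes "\<And>i. i < N \<Longrightarrow> f i = f (i mod P)"
  shows "(\<Sum>i<N. f i) = real (N div P) *\<^sub>R (\<Sum>i<P. f i) + (\<Sum>i<N mod P. f i)"
  using assms
proof (induction N)
  case 0
  then show ?case by simp
next
  case (Suc N)
  have step: "(\<Sum>i<Suc N. f i) = real (N div P) *\<^sub>R (\<Sum>i<P. f i) + (\<Sum>i<Suc (N mod P). f i)"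
    using Suc by simp
  show ?case
  proof (cases "Suc (N mod P) = P")
    case True
    then have "Suc N mod P = 0" "Suc N div P = Suc (N div P)"
      by (simp_all add: mod_Suc div_Suc)
    then show ?thesis using step True by (simp add: algebra_simps)
  next
    case False
    then have "Suc N mod P = Suc (N mod P)" "Suc N div P = N div P"
      by (simp_all add: mod_Suc div_Suc)
    then show ?thesis using step by simp
  qed
qed

section \<open>The orbit of a symmetric word\<close>

definition slope_map :: "real \<Rightarrow> real \<Rightarrow> real \<Rightarrow> real" where
  "slope_map a b y = (if y > 0 then a * y else b * y)"

lemma slope_map_0 [simp]: "slope_map a b 0 = 0"
  by (simp add: slope_map_def)

lemma slope_map_scale: "l > 0 \<Longrightarrow> slope_map a b (l * y) = l * slope_map a b y"
  by (auto simp: slope_map_def zero_less_mult_iff)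

definition pos_sq :: "real \<Rightarrow> real" where
  "pos_sq y = (if y > 0 then y\<^sup>2 else 0)"

definition nonpos_sq :: "real \<Rightarrow> real" where
  "nonpos_sq y = (if y > 0 then 0 else y\<^sup>2)"

text \<open>\<open>polygon_vertex (Q c w) (Suc t)\<close> is the vertex \<open>\<Gamma>\<^sub>t\<close> (see
  \<open>Gamma_eq_polygon_vertex\<close>).\<close>

definition polygon_vertex :: "(nat \<Rightarrow> real) \<Rightarrow> nat \<Rightarrow> real \<times> real" where
  "polygon_vertex x N = (\<Sum>i<N. (pos_sq (x i), nonpos_sq (x i)))"

lemma pos_sq_nonneg: "pos_sq y \<ge> 0" and nonpos_sq_nonneg: "nonpos_sq y \<ge> 0"
  by (simp_all add: pos_sq_def nonpos_sq_def)

lemma polygon_vertex_Suc: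
  "polygon_vertex x (Suc N) = polygon_vertex x N + (pos_sq (x N), nonpos_sq (x N))"
  by (simp add: polygon_vertex_def)

lemma polygon_vertex_Suc_eq_iff: "polygon_vertex x (Suc N) = polygon_vertex x N \<longleftrightarrow> x N = 0"
  by (simp add: polygon_vertex_Suc pos_sq_def nonpos_sq_def zero_prod_def)

lemma fst_polygon_vertex: "fst (polygon_vertex x N) = (\<Sum>i<N. pos_sq (x i))"
  and snd_polygon_vertex: "snd (polygon_vertex x N) = (\<Sum>i<N. nonpos_sq (x i))"
  by (simp_all add: polygon_vertex_def fst_sum snd_sum)

locale symmetric_orbit =
  fixes x :: "nat \<Rightarrow> real" and a b :: real and n t1 :: nat
  assumes recurrence: "\<And>m. 1 \<le> m \<Longrightarrow> m < n \<Longrightarrow> x (Suc m) = slope_map a b (x m) - x (m - 1)"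
    and x_0: "x 0 = 0" and x_1: "x 1 = 1"
    and symmetric: "\<And>t. t \<le> n \<Longrightarrow> x (n - t) = x t"
    and t1: "1 \<le> t1" "t1 < n" "x t1 = 0"
    and pos_before_t1: "\<And>s. 1 \<le> s \<Longrightarrow> s < t1 \<Longrightarrow> x s > 0"
begin

lemma two_le_t1: "2 \<le> t1"
  using t1 x_1 by (cases "t1 = 1") auto

text \<open>On the first arc the recurrence is the linear one, which preserves the quadratic form
  \<open>X\<^sup>2 - a X Y + Y\<^sup>2\<close> of consecutive terms.\<close>

lemma first_arc_invariant:
  assumes "1 \<le> m" "m \<le> t1"
  shows "(x m)\<^sup>2 - a * x m * x (m - 1) + (x (m - 1))\<^sup>2 = 1"
  using assms
proof (induction m rule: nat_induct_at_least)
  case base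
  then show ?case using x_0 x_1 by simp
next
  case (Suc m)
  have "x m > 0" using pos_before_t1 Suc by simp
  then have "x (Suc m) = a * x m - x (m - 1)"
    using recurrence[of m] Suc t1 by (simp add: slope_map_def)
  then have "(x (Suc m))\<^sup>2 - a * x (Suc m) * x m + (x m)\<^sup>2
      = (x m)\<^sup>2 - a * x m * x (m - 1) + (x (m - 1))\<^sup>2"
    by algebra
  then show ?case using Suc by simp
qed

lemma x_before_t1: "x (t1 - 1) = 1"
proof -
  have "(x (t1 - 1))\<^sup>2 = 1" using first_arc_invariant[of t1] t1 by simp
  moreover have "x (t1 - 1) > 0" using pos_before_t1[of "t1 - 1"] two_le_t1 by simp
  ultimately show ?thesis by (auto simp: power2_eq_1_iff)
qed

lemma x_after_t1: "x (Suc t1) = -1"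
  using recurrence[of t1] t1 x_before_t1 by simp

lemma mirror_of_t1: "x (n - t1) = 0" "x (Suc (n - t1)) = 1"
proof -
  show "x (n - t1) = 0" using symmetric[of t1] t1 by simp
  have "Suc (n - t1) = n - (t1 - 1)" using t1 by simp
  then show "x (Suc (n - t1)) = 1" using symmetric[of "t1 - 1"] x_before_t1 by simp
qed

text \<open>Since \<^const>\<open>slope_map\<close> is positively homogeneous, the sequence restarts as a scaled
  copy of itself after every \<open>z\<close> with \<open>x z = 0 < x (Suc z)\<close>; the first such \<open>z\<close> is its period.\<close>

definition period :: nat where
  "period = (LEAST z. 0 < z \<and> z < n \<and> x z = 0 \<and> x (Suc z) > 0)"

lemma period_le:
  assumes "0 < z" "z < n" "x z = 0" "x (Suc z) > 0"
  shows "period \<le> z"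
  unfolding period_def by (rule Least_le) (use assms in simp)

lemma period_restart: "0 < period" "period < n" "x period = 0" "x (Suc period) > 0"
proof -
  have "0 < n - t1 \<and> n - t1 < n \<and> x (n - t1) = 0 \<and> x (Suc (n - t1)) > 0"
    using t1 mirror_of_t1 by simp
  then have "0 < period \<and> period < n \<and> x period = 0 \<and> x (Suc period) > 0"
    unfolding period_def by (rule LeastI)
  then show "0 < period" "period < n" "x period = 0" "x (Suc period) > 0" by auto
qed

lemma Suc_t1_less_period: "Suc t1 < period"
proof -
  have "\<not> period < t1" using pos_before_t1[of period] period_restart by auto
  moreover have "period \<noteq> t1" "period \<noteq> Suc t1" using period_restart x_after_t1 by auto
  ultimately show ?thesis by linarith
qed

lemma x_scaled_copy:
  assumes "y \<le> z" "x y = 0" "x z = 0" "l > 0" "x (Suc z) = l * x (Suc y)" "z + j \<le> n"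
  shows "x (z + j) = l * x (y + j)"
  using recurrence_scaled_copy[where g = "slope_map a b", OF recurrence] slope_map_scale assms
  by simp

lemma x_nonzero_after_t1:
  assumes "t1 < z" "z < period"
  shows "x z \<noteq> 0"
  using assms
proof (induction z rule: less_induct)
  case (less z)
  show ?case
  proof
    assume x_z: "x z = 0"
    have "z \<noteq> Suc t1" using x_z x_after_t1 by auto
    then have "t1 < z - 1" using less.prems by linarith
    then have "x (z - 1) \<noteq> 0" using less.IH[of "z - 1"] less.prems by simp
    moreover have "x (Suc z) = - x (z - 1)"
      using recurrence[of z] x_z less.prems period_restart(2) by simp
    moreover have "\<not> x (Suc z) > 0"
      using period_le[of z] x_z less.prems period_restart(2) by auto
    ultimately have "x (Suc z) < 0" by linarith
    define \<nu> where "\<nu> = - x (Suc z)"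
    have \<nu>: "\<nu> > 0" "x (Suc z) = \<nu> * x (Suc t1)"
      using \<open>x (Suc z) < 0\<close> x_after_t1 by (auto simp: \<nu>_def)
    text \<open>The sequence from \<open>z\<close> on is a scaled copy of the one from \<open>t1\<close> on, so it would
      restart before \<open>period\<close>.\<close>
    define k where "k = t1 + (period - z)"
    have "x period = \<nu> * x k" "x (Suc period) = \<nu> * x (Suc k)"
      using x_scaled_copy[of t1 z \<nu> "period - z"] x_scaled_copy[of t1 z \<nu> "Suc (period - z)"]
        x_z \<nu> t1 less.prems period_restart(2) by (simp_all add: k_def)
    then have "x k = 0" "x (Suc k) > 0"
      using period_restart \<nu> by (simp_all add: zero_less_mult_iff)
    moreover have "0 < k" "k < period" using less.prems by (auto simp: k_def)
    ultimately show False using period_le[of k] period_restart(2) by simp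
  qed
qed

lemma zero_before_period:
  assumes "r < period" "x r = 0"
  shows "r = 0 \<or> r = t1"
  using assms pos_before_t1[of r] x_nonzero_after_t1[of r]
  by (cases "r = 0"; cases "r < t1") (auto simp: not_less_iff_gr_or_eq)

lemma x_shift_periods:
  assumes "m * period + r \<le> n"
  shows "x (m * period + r) = x (Suc period) ^ m * x r"
  using assms
proof (induction m)
  case 0
  then show ?case by simp
next
  case (Suc m)
  have "x (period + (m * period + r)) = x (Suc period) * x (m * period + r)"
    using x_scaled_copy[of 0 period "x (Suc period)" "m * period + r"] Suc.prems period_restart x_0 x_1
    by (simp add: add.assoc)
  then show ?case using Suc by (simp add: add.assoc)
qed

text \<open>The zero \<open>n - t1\<close> mirrors \<open>t1\<close> and is followed by \<open>1 > 0\<close>. Its residue modulo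
  \<open>period\<close> is a zero in \<open>[0, period)\<close> that is not followed by a negative term, hence \<open>0\<close>
  rather than \<open>t1\<close>.\<close>

lemma mirror_of_t1_mod_period: "(n - t1) mod period = 0"
proof (rule ccontr)
  define m r where "m = (n - t1) div period" and "r = (n - t1) mod period"
  assume "(n - t1) mod period \<noteq> 0"
  then have "r \<noteq> 0" by (simp add: r_def)
  have decomp: "n - t1 = m * period + r"
    using div_mult_mod_eq[of "n - t1" period] by (simp add: m_def r_def)
  have "x (n - t1) = x (Suc period) ^ m * x r"
    using x_shift_periods[of m r] decomp t1 by simp
  then have "x r = 0" using mirror_of_t1 period_restart by simp
  then have "r = t1" using zero_before_period[of r] \<open>r \<noteq> 0\<close> period_restart by (simp add: r_def)
  then have "x (Suc (n - t1)) = - (x (Suc period) ^ m)"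
    using x_shift_periods[of m "Suc r"] decomp t1 x_after_t1 by simp
  moreover have "x (Suc period) ^ m > 0" using period_restart by simp
  ultimately show False using mirror_of_t1 by simp
qed

lemma x_Suc_period: "x (Suc period) = 1"
proof -
  define m where "m = (n - t1) div period"
  have decomp: "n - t1 = m * period"
    using div_mult_mod_eq[of "n - t1" period] mirror_of_t1_mod_period by (simp add: m_def)
  then have "m \<noteq> 0" using t1(2) by (cases m) auto
  have "x (Suc (n - t1)) = x (Suc period) ^ m"
    using x_shift_periods[of m 1] decomp t1 x_1 by simp
  then have "x (Suc period) ^ m = 1" using mirror_of_t1 by simp
  then show ?thesis using power_eq_1_iff[of "x (Suc period)" m] \<open>m \<noteq> 0\<close> period_restart by simp
qed

lemma x_periodic: "N \<le> n \<Longrightarrow> x N = x (N mod period)"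
  using x_shift_periods[of "N div period" "N mod period"] div_mult_mod_eq[of N period] x_Suc_period
  by simp

lemma n_mod_period: "n mod period = t1"
proof -
  have "n = (n - t1) div period * period + t1"
    using div_mult_mod_eq[of "n - t1" period] mirror_of_t1_mod_period t1 by simp
  then show ?thesis using Suc_t1_less_period by (metis Suc_lessD mod_mult_self3 mod_less)
qed

lemma polygon_vertex_periodic:
  "N \<le> n \<Longrightarrow> polygon_vertex x N
    = real (N div period) *\<^sub>R polygon_vertex x period + polygon_vertex x (N mod period)"
  unfolding polygon_vertex_def by (rule sum_lessThan_periodic) (simp add: x_periodic)

lemma polygon_vertex_t1: "fst (polygon_vertex x t1) > 0" "snd (polygon_vertex x t1) = 0"
proof -
  have "pos_sq (x 1) \<le> (\<Sum>i<t1. pos_sq (x i))"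
    by (rule member_le_sum) (use two_le_t1 pos_sq_nonneg in auto)
  then show "fst (polygon_vertex x t1) > 0"
    using x_1 by (simp add: fst_polygon_vertex pos_sq_def)
  have "nonpos_sq (x i) = 0" if "i < t1" for i
    using pos_before_t1[of i] that x_0 by (cases "i = 0") (auto simp: nonpos_sq_def)
  then show "snd (polygon_vertex x t1) = 0" by (simp add: snd_polygon_vertex)
qed

lemma snd_polygon_vertex_period: "snd (polygon_vertex x period) > 0"
proof -
  have "nonpos_sq (x (Suc t1)) \<le> (\<Sum>i<period. nonpos_sq (x i))"
    by (rule member_le_sum) (use Suc_t1_less_period nonpos_sq_nonneg in auto)
  then show ?thesis using x_after_t1 by (simp add: snd_polygon_vertex nonpos_sq_def)
qed

text \<open>A zero \<open>t\<close> sits at \<open>j\<close> whole loops plus either nothing or the first arc, whereas the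
  endpoint is \<open>n div period\<close> loops plus the first arc. The second coordinate, to which the
  first arc does not contribute, forces the proportionality factor to be \<open>j / (n div period)\<close>,
  and then the first coordinate forces \<open>t \<in> {0, n}\<close>.\<close>

lemma zero_vertex_off_median:
  assumes "1 \<le> t" "t < n" "x t = 0"
  shows "polygon_vertex x t \<noteq> u *\<^sub>R polygon_vertex x n"
proof
  assume on_median: "polygon_vertex x t = u *\<^sub>R polygon_vertex x n"
  define V j r m where "V = polygon_vertex x period" and "j = t div period"
    and "r = t mod period" and "m = n div period"
  have t_decomp: "t = j * period + r" and n_decomp: "n = m * period + t1"
    using div_mult_mod_eq[of t period] div_mult_mod_eq[of n period] n_mod_period
    by (simp_all add: j_def r_def m_def)
  have "x r = 0" using x_periodic[of t] assms by (simp add: r_def)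
  then have r: "r = 0 \<or> r = t1" using zero_before_period period_restart by (simp add: r_def)
  have snd_r: "snd (polygon_vertex x r) = 0"
    using r polygon_vertex_t1 by (auto simp: snd_polygon_vertex)
  have "real j *\<^sub>R V + polygon_vertex x r = u *\<^sub>R (real m *\<^sub>R V + polygon_vertex x t1)"
    using on_median polygon_vertex_periodic[of t] polygon_vertex_periodic[of n] n_mod_period assms
    by (simp add: V_def j_def r_def m_def)
  then have fst_eq: "real j * fst V + fst (polygon_vertex x r)
      = u * (real m * fst V + fst (polygon_vertex x t1))"
    and snd_eq: "real j * snd V = u * real m * snd V"
    using snd_r polygon_vertex_t1 by (auto simp: prod_eq_iff)
  have j: "real j = u * real m" using snd_eq snd_polygon_vertex_period by (simp add: V_def)
  then have fst_r: "fst (polygon_vertex x r) = u * fst (polygon_vertex x t1)"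
    using fst_eq by (simp add: algebra_simps)
  from r show False
  proof
    assume "r = 0"
    then have "u = 0" using fst_r polygon_vertex_t1 by (simp add: polygon_vertex_def)
    then show False using j t_decomp \<open>r = 0\<close> assms(1) by simp
  next
    assume "r = t1"
    then have "u = 1" using fst_r polygon_vertex_t1 by simp
    then show False using j t_decomp n_decomp \<open>r = t1\<close> assms(2) by simp
  qed
qed

end

section \<open>Legal points\<close>

lemma Q_0 [simp]: "Q c w 0 = 0"
  and Qprev_0 [simp]: "Qprev c w 0 = -1"
  and Q_Suc: "Q c w (Suc t) = lval c (w ! t) * Q c w t - Qprev c w t"
  and Qprev_Suc [simp]: "Qprev c w (Suc t) = Q c w t"
  by (simp_all add: Q_def Qprev_def)

lemma Q_1 [simp]: "Q c w (Suc 0) = 1"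
  using Q_Suc[of c w 0] by simp

lemma Qprev_eq: "1 \<le> t \<Longrightarrow> Qprev c w t = Q c w (t - 1)"
  by (cases t) auto

lemma lval_A: "lval c A = fst c" and lval_B: "lval c B = snd c"
  by (cases c; simp)+

lemma letter_eq_orbit:
  assumes realised: "equiv_at c w (sym_word c (length w))"
    and "t < length w" "\<not> on_boundary (orbit c t)"
  shows "w ! t = letter_of (orbit c t)"
proof -
  have "sym_word c (length w) ! t = letter_of (orbit c t)"
    using assms(2) by (simp add: sym_word_def)
  then show ?thesis using realised assms(2,3) unfolding equiv_at_def by metis
qed

text \<open>Where \<open>w\<close> and the symbolic word of the orbit disagree the orbit lies on a boundary ray,
  i.e. \<open>Q c w t = 0\<close>, and there the letter is multiplied by \<open>0\<close>.\<close>

lemma orbit_eq_Q: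
  assumes realised: "equiv_at c w (sym_word c (length w))"
  shows "t \<le> length w \<Longrightarrow> orbit c t = (Q c w t, Qprev c w t)"
proof (induction t)
  case 0
  then show ?case by (simp add: orbit_def)
next
  case (Suc t)
  then have IH: "orbit c t = (Q c w t, Qprev c w t)" by simp
  have "lval c (letter_of (orbit c t)) * Q c w t = lval c (w ! t) * Q c w t"
  proof (cases "Q c w t = 0")
    case False
    then have "\<not> on_boundary (orbit c t)" using IH by (simp add: on_boundary_def)
    then show ?thesis using letter_eq_orbit[OF realised] Suc.prems by simp
  qed simp
  then show ?case using IH by (simp add: orbit_def Fmap_def Q_Suc)
qed

lemma letter_eq_sign:
  assumes realised: "equiv_at c w (sym_word c (length w))"
    and "t < length w" "Q c w t \<noteq> 0"
  shows "w ! t = (if Q c w t > 0 then A else B)"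
proof -
  have orbit: "orbit c t = (Q c w t, Qprev c w t)" using orbit_eq_Q[OF realised] assms by simp
  then have "\<not> on_boundary (orbit c t)" using assms by (simp add: on_boundary_def)
  then show ?thesis
    using letter_eq_orbit[OF realised] orbit assms by (simp add: letter_of_def)
qed

lemma Q_recurrence:
  assumes realised: "equiv_at c w (sym_word c (length w))"
    and "1 \<le> m" "m < length w"
  shows "Q c w (Suc m) = slope_map (fst c) (snd c) (Q c w m) - Q c w (m - 1)"
proof -
  have "lval c (w ! m) * Q c w m = slope_map (fst c) (snd c) (Q c w m)"
    using letter_eq_sign[OF realised, of m] assms
    by (cases "Q c w m = 0") (auto simp: slope_map_def lval_A lval_B)
  then show ?thesis using assms by (simp add: Q_Suc Qprev_eq)
qed

lemma Gamma_eq_polygon_vertex: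
  assumes realised: "equiv_at c w (sym_word c (length w))"
    and "t < length w"
  shows "Gamma c w t = polygon_vertex (Q c w) (Suc t)"
proof -
  have gamma_i: "gamma c w i = (pos_sq (Q c w i), nonpos_sq (Q c w i))" if "i \<le> t" for i
    using letter_eq_sign[OF realised, of i] that assms
    by (cases "Q c w i = 0") (auto simp: gamma_def pos_sq_def nonpos_sq_def)
  show ?thesis
    unfolding Gamma_def polygon_vertex_def atLeast0AtMost lessThan_Suc_atMost
    by (rule sum.cong) (auto simp: gamma_i)
qed

lemma Gamma_0 [simp]: "Gamma c w 0 = 0"
  by (simp add: Gamma_def gamma_def zero_prod_def)

lemma Q_symmetric:
  assumes realised: "equiv_at c w (sym_word c (length w))"
    and "Cw w c = 0" "t \<le> length w"
  shows "Q c w (length w - t) = Q c w t"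
proof -
  define n k where "n = length w" and "k = n div 2"
  have recurrence: "\<And>m. 1 \<le> m \<Longrightarrow> m < n \<Longrightarrow>
      Q c w (Suc m) = slope_map (fst c) (snd c) (Q c w m) - Q c w (m - 1)"
    using Q_recurrence[OF realised] by (simp add: n_def)
  obtain p q where "p + q = n" "1 \<le> q" "q \<le> Suc p"
    and centre: "Q c w p = Q c w q" "Q c w (Suc p) = Q c w (q - 1)"
  proof (cases "odd n")
    case True
    then have "n = k + Suc k" unfolding k_def by presburger
    moreover have "Q c w k = Q c w (Suc k)"
      using \<open>Cw w c = 0\<close> True by (simp add: Cw_def Let_def n_def k_def)
    ultimately show ?thesis by (intro that[of k "Suc k"]) simp_all
  next
    case False
    then have Cw_even: "Q c w (Suc k) = Qprev c w k"
      using \<open>Cw w c = 0\<close> by (simp add: Cw_def Let_def n_def k_def)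
    moreover have "k \<noteq> 0"
    proof
      assume "k = 0"
      then show False using Cw_even by (simp add: Q_Suc)
    qed
    moreover have "n = k + k" using False unfolding k_def by presburger
    ultimately show ?thesis by (intro that[of k k]) (simp_all add: Qprev_eq)
  qed
  then have "Q c w (n - t) = Q c w t"
    using recurrence_symmetric[OF recurrence _ _ _ centre] assms(3) by (simp add: n_def)
  then show ?thesis by (simp add: n_def)
qed

lemma rank_one_no_AB:
  assumes "rank u = 1" "Suc i < length u"
  shows "\<not> (u ! i = A \<and> u ! Suc i = B)"
proof -
  have "finite {i. Suc i < length u \<and> u ! i = A \<and> u ! Suc i = B}"
    by (rule finite_subset[of _ "{..<length u}"]) auto
  moreover have "count_factor A B u = 0" using assms(1) by (simp add: rank_def)
  ultimately show ?thesis using assms(2) by (auto simp: count_factor_def)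
qed

lemma first_intersection:
  assumes "isec_seq c w \<noteq> []"
  shows "1 \<le> hd (isec_seq c w)" "hd (isec_seq c w) < length w" "Q c w (hd (isec_seq c w)) = 0"
    and "\<And>s. 1 \<le> s \<Longrightarrow> s < hd (isec_seq c w) \<Longrightarrow> Q c w s \<noteq> 0"
proof -
  have mem: "s \<in> set (isec_seq c w) \<longleftrightarrow> 1 \<le> s \<and> s < length w \<and> Q c w s = 0" for s
    by (auto simp: isec_seq_def)
  obtain t1 ts where ts: "isec_seq c w = t1 # ts" using assms by (cases "isec_seq c w") auto
  moreover have "sorted (isec_seq c w)"
    unfolding isec_seq_def by (rule sorted_filter[of id, simplified]) simp
  ultimately have least: "t1 \<le> s" if "s \<in> set (isec_seq c w)" for s
    using that by auto
  have "t1 \<in> set (isec_seq c w)" using ts by simp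
  then have "1 \<le> t1 \<and> t1 < length w \<and> Q c w t1 = 0" using mem by blast
  then show t1: "1 \<le> hd (isec_seq c w)" "hd (isec_seq c w) < length w"
    "Q c w (hd (isec_seq c w)) = 0"
    using ts by simp_all
  show "Q c w s \<noteq> 0" if "1 \<le> s" "s < hd (isec_seq c w)" for s
    using least[of s] mem[of s] that t1(2) ts by auto
qed

text \<open>A sign change \<open>+ \<rightarrow> -\<close> of \<open>Q\<close> off the boundary would be a factor \<open>ab\<close> of the prefix,
  which a rank one word cannot contain.\<close>

lemma Q_pos_before_first_intersection:
  assumes realised: "equiv_at c w (sym_word c (length w))"
    and "rank u = 1" "equiv_at c (take t1 w) u" "t1 \<le> length w"
    and nonzero: "\<And>s. 1 \<le> s \<Longrightarrow> s < t1 \<Longrightarrow> Q c w s \<noteq> 0"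
    and "1 \<le> s" "s < t1"
  shows "Q c w s > 0"
  using \<open>1 \<le> s\<close> \<open>s < t1\<close>
proof (induction s rule: nat_induct_at_least)
  case base
  then show ?case by simp
next
  case (Suc s)
  have same_letter: "u ! i = w ! i" if "1 \<le> i" "i < t1" for i
  proof -
    have "orbit c i = (Q c w i, Qprev c w i)" using orbit_eq_Q[OF realised] that assms(4) by simp
    then have "\<not> on_boundary (orbit c i)" using nonzero that by (simp add: on_boundary_def)
    then show ?thesis using assms(3,4) that unfolding equiv_at_def by auto
  qed
  have "Q c w s > 0" "Q c w (Suc s) \<noteq> 0" using Suc nonzero by simp_all
  show ?case
  proof (rule ccontr)
    assume "\<not> Q c w (Suc s) > 0"
    then have "w ! s = A" "w ! Suc s = B"
      using letter_eq_sign[OF realised] \<open>Q c w s > 0\<close> \<open>Q c w (Suc s) \<noteq> 0\<close> Suc assms(4)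
      by auto
    moreover have "length u = t1" using assms(3,4) by (simp add: equiv_at_def)
    ultimately show False
      using rank_one_no_AB[OF assms(2), of s] same_letter[of s] same_letter[of "Suc s"] Suc by simp
  qed
qed

lemma legal_simple_symmetric_orbit:
  assumes "legal_point w c" "simple_isec c w" "isec_seq c w \<noteq> []"
  shows "symmetric_orbit (Q c w) (fst c) (snd c) (length w) (hd (isec_seq c w))"
proof -
  have realised: "equiv_at c w (sym_word c (length w))" and "Cw w c = 0"
    using assms(1) by (simp_all add: legal_point_def)
  obtain u where "rank u = 1" "equiv_at c (take (hd (isec_seq c w)) w) u"
    using assms(2,3) by (auto simp: simple_isec_def)
  then show ?thesis
    using Q_recurrence[OF realised] Q_symmetric[OF realised \<open>Cw w c = 0\<close>]
      first_intersection[OF assms(3)]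
      Q_pos_before_first_intersection[OF realised, of u "hd (isec_seq c w)"]
    by unfold_locales auto
qed

theorem mainTheorem12:
  fixes w :: "letter list" and c :: "real \<times> real"
  assumes "odd (rank w)"
    and "legal_point w c"
    and "simple_isec c w"
  shows "regular_polygonal c w"
  unfolding regular_polygonal_def
proof (intro allI impI notI)
  fix t
  assume t: "1 \<le> t \<and> t < length w \<and> Gamma c w t = Gamma c w (t - 1)"
    and on_median: "Gamma c w t \<in> closed_segment (Gamma c w 0) (Gamma c w (length w - 1))"
  have realised: "equiv_at c w (sym_word c (length w))"
    using assms(2) by (simp add: legal_point_def)
  have vertex: "Gamma c w s = polygon_vertex (Q c w) (Suc s)" if "s < length w" for s
    using Gamma_eq_polygon_vertex[OF realised that] .
  have "t - 1 < length w" "Suc (t - 1) = t" "length w - 1 < length w" "Suc (length w - 1) = length w"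
    using t by auto
  then have Gamma_t: "Gamma c w t = polygon_vertex (Q c w) t"
    and Gamma_end: "Gamma c w (length w - 1) = polygon_vertex (Q c w) (length w)"
    using vertex t by metis+
  then have "Q c w t = 0"
    using vertex[of t] t polygon_vertex_Suc_eq_iff by metis
  then have "isec_seq c w \<noteq> []" using t by (auto simp: isec_seq_def filter_empty_conv)
  then interpret symmetric_orbit "Q c w" "fst c" "snd c" "length w" "hd (isec_seq c w)"
    using assms(2,3) by (intro legal_simple_symmetric_orbit)
  obtain u where "Gamma c w t = u *\<^sub>R Gamma c w (length w - 1)"
    using on_median by (auto simp: in_segment)
  then have "polygon_vertex (Q c w) t = u *\<^sub>R polygon_vertex (Q c w) (length w)"
    using Gamma_t Gamma_end by simp
  then show False using zero_vertex_off_median[of t u] t \<open>Q c w t = 0\<close> by simp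
qed

end
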